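(* Let $f$ satisfy conditions (1) and (2a) and let $a>0$. Then the series \[ a\,e^{-pr^2}\sum_{n=0}^\infty\frac{c_{2n}(p)\,p^{2n}}{(n!)^2}\,r^{2n} \] is absolutely and uniformly convergent for all $r\in[0,\infty)$ and $p\in[0,\infty)$.
   Context: $f:[0,\infty)\to\mathbb{R}$; $c_n=2\pi\int_0^\infty f(r)\,r^{n+1}dr$ and $c_n(p)=2\pi\int_0^\infty f(r)\,r^{n+1}e^{-pr^2}dr$. Condition (1): there is a constant $F$ with $0\le f(r)\le F$ for all $r\ge0$, $c_0$ exists and $c_0>0$. Condition (2a): $c_{2n}$ exists for all $n\in\mathbb{N}_0$ and $c_n^{1/n}=o(n)$ as $n\to\infty$. *)

theory Defs
  imports "HOL-Analysis.Analysis" "HOL-Library.Landau_Symbols"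
begin

definition cmom :: "(real \<Rightarrow> real) \<Rightarrow> nat \<Rightarrow> real" where
  "cmom f n = 2 * pi * (LINT r:{0..}|lborel. f r * r ^ (n + 1))"

definition cmomp :: "(real \<Rightarrow> real) \<Rightarrow> nat \<Rightarrow> real \<Rightarrow> real" where
  "cmomp f n p = 2 * pi * (LINT r:{0..}|lborel. f r * r ^ (n + 1) * exp (- p * r\<^sup>2))"

definition cmom_exists :: "(real \<Rightarrow> real) \<Rightarrow> nat \<Rightarrow> bool" where
  "cmom_exists f n \<longleftrightarrow> set_integrable lborel {0..} (\<lambda>r. f r * r ^ (n + 1))"

definition cond1 :: "(real \<Rightarrow> real) \<Rightarrow> bool" where
  "cond1 f \<longleftrightarrow> (\<exists>F. \<forall>r\<ge>0. 0 \<le> f r \<and> f r \<le> F) \<and> cmom_exists f 0 \<and> cmom f 0 > 0"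

definition cond2a :: "(real \<Rightarrow> real) \<Rightarrow> bool" where
  "cond2a f \<longleftrightarrow> (\<forall>n. cmom_exists f (2 * n)) \<and>
     (\<lambda>n. root n (cmom f n)) \<in> o(\<lambda>n. real n)"

definition lterm :: "(real \<Rightarrow> real) \<Rightarrow> real \<Rightarrow> nat \<Rightarrow> real \<times> real \<Rightarrow> real" where
  "lterm f a n x = (case x of (r, p) \<Rightarrow>
     a * exp (- p * r\<^sup>2) * (cmomp f (2 * n) p * p ^ (2 * n) / (fact n)\<^sup>2 * r ^ (2 * n)))"

end

theory Submission
  imports Defs
begin

text \<open>Writing \<open>c_2n(p)\<close> as an integral turns the \<open>n\<close>-th term of the series into
  \<open>2 \<pi> a \<integral>\<^sub>0\<^sup>\<infinity> f(s) s w_n(p r\<^sup>2) w_n(p s\<^sup>2) ds\<close>, with the Poisson weights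
  \<open>w_n(y) = exp(-y) y^n / n!\<close>. These sum to 1 over \<open>n\<close>, and for \<open>y \<ge> 0\<close>
  \<open>w_n(y) \<le> w_n(n) \<longrightarrow> 0\<close>. Hence the sum of \<open>w_n(x) w_n(y)\<close> over \<open>n \<ge> M\<close> is at most
  \<open>sup {w_n(n) | n \<ge> M}\<close>, so the tails of the series are bounded by \<open>a c_0\<close> times this
  supremum, uniformly in \<open>(r, p)\<close>; as the terms are nonnegative, convergence is absolute.
  Only condition (1) is needed, not (2a).\<close>

definition poisson_weight :: "real \<Rightarrow> nat \<Rightarrow> real" where
  "poisson_weight y n = exp (- y) * y ^ n / fact n"

lemma poisson_weight_nonneg: "y \<ge> 0 \<Longrightarrow> poisson_weight y n \<ge> 0"
  by (simp add: poisson_weight_def)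

lemma poisson_weight_sums: "poisson_weight y sums 1"
proof -
  have "(\<lambda>n. exp (- y) * (y ^ n /\<^sub>R fact n)) sums (exp (- y) * exp y)"
    by (intro sums_mult exp_converges)
  moreover have "(\<lambda>n. exp (- y) * (y ^ n /\<^sub>R fact n)) = poisson_weight y"
    by (auto simp: poisson_weight_def divide_inverse)
  ultimately show ?thesis
    by (simp add: exp_minus)
qed

lemma sum_poisson_weight_le_one:
  assumes "y \<ge> 0" "finite A"
  shows "sum (poisson_weight y) A \<le> 1"
  using sum_le_suminf[OF sums_summable[OF poisson_weight_sums] assms(2)]
    sums_unique[OF poisson_weight_sums] poisson_weight_nonneg[OF assms(1)] by simp

lemma poisson_weight_le_one: "y \<ge> 0 \<Longrightarrow> poisson_weight y n \<le> 1"
  using sum_poisson_weight_le_one[of y "{n}"] by simp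

lemma poisson_weight_le_mode:
  assumes "y \<ge> 0"
  shows "poisson_weight y n \<le> poisson_weight (real n) n"
proof (cases "n = 0 \<or> y = 0")
  case True
  with assms show ?thesis by (cases n) (auto simp: poisson_weight_def)
next
  case False
  then have n: "real n > 0" and y: "y > 0" using assms by auto
  have "ln (y / n) \<le> y / n - 1"
    using n y by (intro ln_le_minus_one) auto
  then have "n * ln (y / n) \<le> y - n"
    using n by (simp add: field_simps)
  then have "n * ln y - y \<le> n * ln n - n"
    using n y by (simp add: ln_div algebra_simps)
  then have "exp (n * ln y - y) \<le> exp (n * ln n - n)"
    by simp
  then have "exp (- y) * y ^ n \<le> exp (- real n) * real n ^ n"
    using n y by (simp add: exp_diff exp_of_nat_mult exp_minus divide_inverse mult.commute)
  then show ?thesis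
    by (simp add: poisson_weight_def divide_right_mono)
qed

lemma one_plus_inverse_power_le:
  assumes "n > 0"
  shows "(1 + 1 / real n) ^ n \<le> exp (1 - 1 / (2 * (real n + 1)))"
proof -
  have n: "real n > 0" using assms by simp
  have "1 + 1 / real n = (real n + 1) / real n"
    using n by (simp add: field_simps)
  then have "ln (1 + 1 / real n) = ln (real n + 1) - ln n"
    using n by (simp add: ln_div)
  also have "\<dots> \<le> (inverse n + inverse (real n + 1)) / 2"
    using ln_inverse_approx_le[OF n zero_less_one] by simp
  finally have "n * ln (1 + 1 / real n) \<le> n * ((inverse n + inverse (real n + 1)) / 2)"
    using n by (intro mult_left_mono) auto
  also have "\<dots> = 1 - 1 / (2 * (real n + 1))"
    using n by (simp add: divide_simps) algebra
  finally have "n * ln (1 + 1 / real n) \<le> 1 - 1 / (2 * (real n + 1))" .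
  then have "exp (n * ln (1 + 1 / real n)) \<le> exp (1 - 1 / (2 * (real n + 1)))"
    by simp
  moreover have "1 + 1 / real n > 0"
    using n by (simp add: add_pos_pos)
  ultimately show ?thesis
    by (simp add: exp_of_nat_mult)
qed

lemma poisson_mode_Suc:
  assumes "n > 0"
  shows "poisson_weight (real (Suc n)) (Suc n)
           = poisson_weight (real n) n * ((1 + 1 / real n) ^ n / exp 1)"
proof -
  have "real (Suc n) ^ Suc n / fact (Suc n) = (real n + 1) ^ n / fact n"
    by (simp add: fact_Suc add.commute)
  also have "(real n + 1) ^ n = real n ^ n * (1 + 1 / real n) ^ n"
    using assms by (simp add: power_mult_distrib[symmetric] field_simps)
  finally have "real (Suc n) ^ Suc n / fact (Suc n) = real n ^ n * (1 + 1 / real n) ^ n / fact n" .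
  moreover have "exp (- real (Suc n)) = exp (- real n) / exp 1"
    by (simp add: exp_diff[symmetric])
  ultimately show ?thesis
    unfolding poisson_weight_def by (simp add: mult.assoc)
qed

text \<open>By Stirling \<open>w_n(n) \<sim> 1 / sqrt (2 \<pi> n)\<close>; this cruder bound, from the trapezoid
  estimate for \<open>ln (1 + 1/n)\<close>, already tends to 0.\<close>

lemma poisson_mode_le_harm: "poisson_weight (real n) n \<le> exp ((1 - harm n) / 2)"
proof (induction n)
  case 0
  then show ?case by (simp add: poisson_weight_def harm_def)
next
  case (Suc n)
  show ?case
  proof (cases "n = 0")
    case True
    then show ?thesis by (simp add: poisson_weight_def harm_def)
  next
    case False
    have "poisson_weight (real (Suc n)) (Suc n) = poisson_weight (real n) n * ((1 + 1 / real n) ^ n / exp 1)"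
      using False by (intro poisson_mode_Suc) simp
    also have "\<dots> \<le> exp ((1 - harm n) / 2) * (exp (1 - 1 / (2 * (real n + 1))) / exp 1)"
      using Suc.IH False one_plus_inverse_power_le[of n]
      by (intro mult_mono divide_right_mono) (auto simp: poisson_weight_nonneg)
    also have "\<dots> = exp ((1 - harm (Suc n)) / 2)"
      by (simp add: harm_Suc exp_diff[symmetric] exp_add[symmetric] field_simps)
    finally show ?thesis .
  qed
qed

lemma poisson_mode_tendsto_zero: "(\<lambda>n. poisson_weight (real n) n) \<longlonglongrightarrow> 0"
proof (rule Lim_null_comparison)
  show "\<forall>\<^sub>F n in sequentially. norm (poisson_weight (real n) n) \<le> exp ((1 - harm n) / 2)"
    by (simp add: poisson_weight_nonneg poisson_mode_le_harm)
  have "filterlim (\<lambda>n. (1 - harm n) / 2 :: real) at_bot sequentially"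
    unfolding filterlim_at_bot
  proof
    fix Z :: real
    show "eventually (\<lambda>n. (1 - harm n) / 2 \<le> Z) sequentially"
      using harm_at_top[unfolded filterlim_at_top, rule_format, of "1 - 2 * Z"]
      by eventually_elim simp
  qed
  then show "(\<lambda>n. exp ((1 - harm n) / 2 :: real)) \<longlonglongrightarrow> 0"
    by (rule filterlim_compose[OF exp_at_bot])
qed

lemma sum_poisson_weight_mult_le:
  assumes "x \<ge> 0" "y \<ge> 0" "finite A" "e \<ge> 0"
    and "\<And>n. n \<in> A \<Longrightarrow> poisson_weight (real n) n \<le> e"
  shows "(\<Sum>n\<in>A. poisson_weight x n * poisson_weight y n) \<le> e"
proof -
  have "(\<Sum>n\<in>A. poisson_weight x n * poisson_weight y n) \<le> (\<Sum>n\<in>A. poisson_weight x n * e)"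
    using assms poisson_weight_le_mode[OF assms(2)]
    by (intro sum_mono mult_left_mono) (auto intro: order_trans simp: poisson_weight_nonneg)
  also have "\<dots> = e * sum (poisson_weight x) A"
    by (simp add: sum_distrib_left mult.commute)
  also have "\<dots> \<le> e"
    using sum_poisson_weight_le_one[OF assms(1,3)] assms(4) by (simp add: mult_left_le)
  finally show ?thesis .
qed

lemma set_integral_sum:
  fixes f :: "'i \<Rightarrow> 'a \<Rightarrow> 'b::{banach, second_countable_topology}"
  assumes "\<And>i. i \<in> I \<Longrightarrow> set_integrable M A (f i)"
  shows "(LINT x:A|M. (\<Sum>i\<in>I. f i x)) = (\<Sum>i\<in>I. LINT x:A|M. f i x)"
  using assms unfolding set_integrable_def set_lebesgue_integral_def
  by (simp add: scaleR_sum_right integral_sum)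

lemma set_integrable_mult_bounded:
  fixes g w :: "'a \<Rightarrow> real"
  assumes "set_integrable M A g" "w \<in> borel_measurable M" "\<And>x. x \<in> A \<Longrightarrow> \<bar>w x\<bar> \<le> B"
  shows "set_integrable M A (\<lambda>x. g x * w x)"
proof (rule set_integrable_bound)
  show "set_integrable M A (\<lambda>x. B * g x)"
    using assms(1) by simp
  have "(\<lambda>x. indicator A x *\<^sub>R g x) \<in> borel_measurable M"
    using assms(1) unfolding set_integrable_def by (rule borel_measurable_integrable)
  from borel_measurable_times[OF this assms(2)]
  show "set_borel_measurable M A (\<lambda>x. g x * w x)"
    unfolding set_borel_measurable_def by (simp add: mult.assoc)
  have "norm (g x * w x) \<le> norm (B * g x)" if "x \<in> A" for x
  proof -
    have "\<bar>g x\<bar> * \<bar>w x\<bar> \<le> \<bar>g x\<bar> * \<bar>B\<bar>"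
      using assms(3)[OF that] by (intro mult_left_mono) auto
    then show ?thesis
      by (simp add: abs_mult mult.commute)
  qed
  then show "AE x in M. x \<in> A \<longrightarrow> norm (g x * w x) \<le> norm (B * g x)"
    by simp
qed

lemma lterm_eq_set_integral:
  "lterm f a n (r, p) = 2 * pi * a *
     (LINT s:{0..}|lborel. f s * s * (poisson_weight (p * r\<^sup>2) n * poisson_weight (p * s\<^sup>2) n))"
proof -
  define K where "K = exp (- p * r\<^sup>2) * p ^ (2 * n) / (fact n)\<^sup>2 * r ^ (2 * n)"
  have K: "K * (f s * s ^ (2 * n + 1) * exp (- p * s\<^sup>2))
      = f s * s * (poisson_weight (p * r\<^sup>2) n * poisson_weight (p * s\<^sup>2) n)" for s
  proof -
    have "(p * r\<^sup>2) ^ n * (p * s\<^sup>2) ^ n = p ^ (2 * n) * r ^ (2 * n) * s ^ (2 * n)"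
      by (simp add: power_mult_distrib power_mult[symmetric] mult_2 power_add)
    then show ?thesis
      by (simp add: K_def poisson_weight_def power2_eq_square field_simps)
  qed
  have "lterm f a n (r, p) = 2 * pi * a * (K * (LINT s:{0..}|lborel. f s * s ^ (2 * n + 1) * exp (- p * s\<^sup>2)))"
    by (simp add: lterm_def cmomp_def K_def)
  also have "K * (LINT s:{0..}|lborel. f s * s ^ (2 * n + 1) * exp (- p * s\<^sup>2))
      = (LINT s:{0..}|lborel. f s * s * (poisson_weight (p * r\<^sup>2) n * poisson_weight (p * s\<^sup>2) n))"
    by (simp only: set_integral_mult_right[symmetric] K)
  finally show ?thesis .
qed

lemma set_integrable_poisson_product:
  assumes "cmom_exists f 0" "p \<ge> 0"
  shows "set_integrable lborel {0..}
           (\<lambda>s. f s * s * (poisson_weight (p * r\<^sup>2) n * poisson_weight (p * s\<^sup>2) n))"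
proof (rule set_integrable_mult_bounded)
  show "set_integrable lborel {0..} (\<lambda>s. f s * s)"
    using assms(1) by (simp add: cmom_exists_def)
  show "(\<lambda>s. poisson_weight (p * r\<^sup>2) n * poisson_weight (p * s\<^sup>2) n) \<in> borel_measurable lborel"
    unfolding poisson_weight_def by measurable
  show "\<bar>poisson_weight (p * r\<^sup>2) n * poisson_weight (p * s\<^sup>2) n\<bar> \<le> 1" for s
    using assms(2) by (simp add: abs_mult poisson_weight_nonneg poisson_weight_le_one mult_le_one)
qed

lemma lterm_nonneg:
  assumes "\<And>s. s \<ge> 0 \<Longrightarrow> f s \<ge> 0" "a \<ge> 0" "p \<ge> 0"
  shows "lterm f a n (r, p) \<ge> 0"
proof -
  have "0 \<le> (LINT s:{0..}|lborel. f s * s * (poisson_weight (p * r\<^sup>2) n * poisson_weight (p * s\<^sup>2) n))"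
    unfolding set_lebesgue_integral_def using assms
    by (intro Bochner_Integration.integral_nonneg)
       (auto simp: indicator_def poisson_weight_nonneg)
  with assms(2) show ?thesis
    by (simp add: lterm_eq_set_integral)
qed

lemma sum_lterm_le:
  assumes "cmom_exists f 0" "\<And>s. s \<ge> 0 \<Longrightarrow> f s \<ge> 0" "a \<ge> 0" "p \<ge> 0"
    and "finite A" "e \<ge> 0" "\<And>n. n \<in> A \<Longrightarrow> poisson_weight (real n) n \<le> e"
  shows "(\<Sum>n\<in>A. lterm f a n (r, p)) \<le> e * a * cmom f 0"
proof -
  let ?g = "\<lambda>n s. f s * s * (poisson_weight (p * r\<^sup>2) n * poisson_weight (p * s\<^sup>2) n)"
  have integrable: "set_integrable lborel {0..} (?g n)" for n
    using assms(1,4) by (rule set_integrable_poisson_product)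
  have "(\<Sum>n\<in>A. LINT s:{0..}|lborel. ?g n s) = (LINT s:{0..}|lborel. (\<Sum>n\<in>A. ?g n s))"
    using integrable by (rule set_integral_sum[symmetric])
  also have "\<dots> \<le> (LINT s:{0..}|lborel. e * (f s * s))"
  proof (rule set_integral_mono)
    show "set_integrable lborel {0..} (\<lambda>s. \<Sum>n\<in>A. ?g n s)"
      using integrable unfolding set_integrable_def by (simp add: sum_distrib_left integrable_sum)
    show "set_integrable lborel {0..} (\<lambda>s. e * (f s * s))"
      using assms(1) by (simp add: cmom_exists_def)
    fix s :: real
    assume "s \<in> {0..}"
    then have "(\<Sum>n\<in>A. ?g n s) \<le> f s * s * e"
      using assms
      by (simp add: sum_distrib_left[symmetric] mult_left_mono sum_poisson_weight_mult_le)
    then show "(\<Sum>n\<in>A. ?g n s) \<le> e * (f s * s)"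
      by (simp add: mult.commute)
  qed
  also have "\<dots> = e * (cmom f 0 / (2 * pi))"
    by (simp add: cmom_def)
  finally have "(\<Sum>n\<in>A. LINT s:{0..}|lborel. ?g n s) \<le> e * (cmom f 0 / (2 * pi))" .
  then have "2 * pi * a * (\<Sum>n\<in>A. LINT s:{0..}|lborel. ?g n s) \<le> 2 * pi * a * (e * (cmom f 0 / (2 * pi)))"
    using assms(3) by (intro mult_left_mono) auto
  then show ?thesis
    by (simp add: lterm_eq_set_integral sum_distrib_left mult_ac)
qed

lemma uniformly_convergent_on_nonneg_series:
  fixes g :: "nat \<Rightarrow> 'a \<Rightarrow> real"
  assumes nonneg: "\<And>n x. x \<in> X \<Longrightarrow> 0 \<le> g n x"
    and tails: "\<And>e. e > 0 \<Longrightarrow> \<exists>M. \<forall>x\<in>X. \<forall>N. (\<Sum>n\<in>{M..<N}. g n x) \<le> e"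
  shows "uniformly_convergent_on X (\<lambda>N x. \<Sum>n<N. g n x)"
proof (rule Cauchy_uniformly_convergent, rule uniformly_Cauchy_onI')
  fix e :: real
  assume "e > 0"
  then obtain M where M: "\<And>x N. x \<in> X \<Longrightarrow> (\<Sum>n\<in>{M..<N}. g n x) \<le> e / 2"
    using tails[of "e / 2"] by auto
  show "\<exists>M. \<forall>x\<in>X. \<forall>m\<ge>M. \<forall>N>m. dist (\<Sum>n<m. g n x) (\<Sum>n<N. g n x) < e"
  proof (intro exI ballI allI impI)
    fix x m N
    assume x: "x \<in> X" and "M \<le> m" "m < N"
    have "(\<Sum>n<N. g n x) - (\<Sum>n<m. g n x) = (\<Sum>n\<in>{m..<N}. g n x)"
      using sum_diff_nat_ivl[of 0 m N] \<open>m < N\<close> by (simp add: lessThan_atLeast0)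
    then have "dist (\<Sum>n<m. g n x) (\<Sum>n<N. g n x) = (\<Sum>n\<in>{m..<N}. g n x)"
      using nonneg[OF x] by (simp add: dist_real_def abs_minus_commute sum_nonneg)
    also have "\<dots> \<le> (\<Sum>n\<in>{M..<N}. g n x)"
      using \<open>M \<le> m\<close> nonneg[OF x] by (intro sum_mono2) auto
    also have "\<dots> < e"
      using M[OF x, of N] \<open>e > 0\<close> by simp
    finally show "dist (\<Sum>n<m. g n x) (\<Sum>n<N. g n x) < e" .
  qed
qed

theorem lemma6:
  fixes f :: "real \<Rightarrow> real" and a :: real
  assumes "cond1 f" and "cond2a f" and "a > 0"
  shows "(\<forall>x\<in>{0..} \<times> {0..}. summable (\<lambda>n. \<bar>lterm f a n x\<bar>))
       \<and> uniformly_convergent_on ({0..} \<times> {0..}) (\<lambda>N x. \<Sum>n<N. lterm f a n x)"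
proof -
  from assms(1) have f_nonneg: "\<And>s. s \<ge> 0 \<Longrightarrow> f s \<ge> 0"
    and c0: "cmom_exists f 0" "cmom f 0 > 0"
    by (auto simp: cond1_def)
  have nonneg: "0 \<le> lterm f a n x" if "x \<in> {0..} \<times> {0..}" for n x
    using that lterm_nonneg[OF f_nonneg] assms(3) by (cases x) auto
  have "uniformly_convergent_on ({0..} \<times> {0..}) (\<lambda>N x. \<Sum>n<N. lterm f a n x)"
  proof (rule uniformly_convergent_on_nonneg_series[OF nonneg])
    fix e :: real
    assume "e > 0"
    define d where "d = e / (a * cmom f 0)"
    have "d > 0" and d: "d * a * cmom f 0 = e"
      using \<open>e > 0\<close> assms(3) c0(2) by (simp_all add: d_def)
    from order_tendstoD(2)[OF poisson_mode_tendsto_zero \<open>d > 0\<close>]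
    obtain M where M: "\<And>n. n \<ge> M \<Longrightarrow> poisson_weight (real n) n < d"
      by (auto simp: eventually_sequentially)
    have "(\<Sum>n\<in>{M..<N}. lterm f a n (r, p)) \<le> e" if "p \<ge> 0" for N r p
      using sum_lterm_le[OF c0(1) f_nonneg _ that, of a "{M..<N}" d r] M \<open>d > 0\<close> assms(3)
      unfolding d by (auto intro: less_imp_le)
    then show "\<exists>M. \<forall>x\<in>{0..} \<times> {0..}. \<forall>N. (\<Sum>n\<in>{M..<N}. lterm f a n x) \<le> e"
      by blast
  qed
  moreover have "summable (\<lambda>n. \<bar>lterm f a n x\<bar>)" if "x \<in> {0..} \<times> {0..}" for x
    using uniformly_convergent_imp_convergent[OF calculation that] nonneg[OF that]
    by (simp add: summable_iff_convergent)
  ultimately show ?thesis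
    by blast
qed

end
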